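(* Using the notation below, the maximum of $s_XT+s_A\min\{T,R\}+s_B\min\{T,S\}$ over all non-negative reals $x_{\kappa\kappa_A\kappa_B}$, $(\kappa,\kappa_A,\kappa_B)\in\{A,B,X\}^3$, summing to one is equal to the maximum of $s_XT+s_AR+s_BS$ over all non-negative reals $x_{\kappa\kappa_A\kappa_B}$ summing to one that additionally satisfy $R\le T$ and $S\le T$.
   Context: For triples $(\kappa,\kappa_A,\kappa_B),(\lambda,\lambda_A,\lambda_B)\in\{A,B,X\}^3$ write $\kappa\kappa_A\kappa_B\to\lambda\lambda_A\lambda_B$ if each of the pairs $(\kappa,\lambda)$, $(\kappa_A,\lambda_A)$, $(\kappa_B,\lambda_B)$ is one of $(A,B),(A,X),(B,X),(X,A),(X,B),(X,X)$, and moreover $(\kappa_B,\lambda_A)\neq(A,B)$. Given reals $x_{\kappa\kappa_A\kappa_B}$, let $T=\sum_{A\kappa_A\kappa_B\to B\lambda_A\lambda_B}x_{A\kappa_A\kappa_B}x_{B\lambda_A\lambda_B}$ (sum over all $\kappa_A,\kappa_B,\lambda_A,\lambda_B$ with $A\kappa_A\kappa_B\to B\lambda_A\lambda_B$), $R=\sum_{\kappa A\kappa_B\to\lambda B\lambda_B}x_{\kappa A\kappa_B}x_{\lambda B\lambda_B}$, $S=\sum_{\kappa\kappa_A A\to\lambda\lambda_A B}x_{\kappa\kappa_A A}x_{\lambda\lambda_A B}$, and $s_\mu=\sum_{\kappa_A,\kappa_B}x_{\mu\kappa_A\kappa_B}$ for $\mu\in\{A,B,X\}$. *)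

theory Defs
  imports Main HOL.Real
begin

datatype letter = A | B | X

definition letters :: "letter set" where
  "letters = {A, B, X}"

definition step :: "letter \<Rightarrow> letter \<Rightarrow> bool" where
  "step k l \<longleftrightarrow> (k, l) \<in> {(A,B), (A,X), (B,X), (X,A), (X,B), (X,X)}"

definition arrow :: "letter \<times> letter \<times> letter \<Rightarrow> letter \<times> letter \<times> letter \<Rightarrow> bool" where
  "arrow t u = (case t of (k, kA, kB) \<Rightarrow> case u of (l, lA, lB) \<Rightarrow>
      step k l \<and> step kA lA \<and> step kB lB \<and> (kB, lA) \<noteq> (A, B))"

type_synonym weights = "letter \<times> letter \<times> letter \<Rightarrow> real"

definition T_val :: "weights \<Rightarrow> real" where
  "T_val x = (\<Sum>kA\<in>letters. \<Sum>kB\<in>letters. \<Sum>lA\<in>letters. \<Sum>lB\<in>letters.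
      if arrow (A, kA, kB) (B, lA, lB) then x (A, kA, kB) * x (B, lA, lB) else 0)"

definition R_val :: "weights \<Rightarrow> real" where
  "R_val x = (\<Sum>k\<in>letters. \<Sum>kB\<in>letters. \<Sum>l\<in>letters. \<Sum>lB\<in>letters.
      if arrow (k, A, kB) (l, B, lB) then x (k, A, kB) * x (l, B, lB) else 0)"

definition S_val :: "weights \<Rightarrow> real" where
  "S_val x = (\<Sum>k\<in>letters. \<Sum>kA\<in>letters. \<Sum>l\<in>letters. \<Sum>lA\<in>letters.
      if arrow (k, kA, A) (l, lA, B) then x (k, kA, A) * x (l, lA, B) else 0)"

definition s_val :: "weights \<Rightarrow> letter \<Rightarrow> real" where
  "s_val x m = (\<Sum>kA\<in>letters. \<Sum>kB\<in>letters. x (m, kA, kB))"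

definition simplex :: "weights set" where
  "simplex = {x. (\<forall>t. 0 \<le> x t) \<and>
      (\<Sum>k\<in>letters. \<Sum>kA\<in>letters. \<Sum>kB\<in>letters. x (k, kA, kB)) = 1}"

definition F_obj :: "weights \<Rightarrow> real" where
  "F_obj x = s_val x X * T_val x + s_val x A * min (T_val x) (R_val x)
             + s_val x B * min (T_val x) (S_val x)"

definition G_obj :: "weights \<Rightarrow> real" where
  "G_obj x = s_val x X * T_val x + s_val x A * R_val x + s_val x B * S_val x"

definition is_max_on :: "(weights \<Rightarrow> real) \<Rightarrow> weights set \<Rightarrow> real \<Rightarrow> bool" where
  "is_max_on f D M \<longleftrightarrow> (\<exists>x\<in>D. f x = M) \<and> (\<forall>x\<in>D. f x \<le> M)"

end

(* Call a weight vector balanced if R <= T and S <= T; there F and G coincide, so it is enough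
   to dominate F at a maximiser x of F by G at some balanced y.  Such a y arises from x by moving
   a fraction a of the mass with kappa_A = A to kappa_A = X and a fraction b of the mass with
   kappa_B = A to kappa_B = X.  Replacing A by X only relaxes the relation ->, so these moves never
   decrease T, and they keep every s_mu; the first multiplies R by 1 - a and can only increase S,
   the second multiplies S by 1 - b and can only increase R.  Brouwer's theorem on the unit square
   yields a and b for which R and S are cut down exactly to min(., T). *)

theory Submission
  imports Defs "HOL-Analysis.Function_Topology" "HOL-Analysis.Brouwer_Fixpoint"
begin

lemma UNIV_letter: "(UNIV :: letter set) = {A, B, X}"
  using letter.exhaust by auto

instance letter :: finite
  by standard (simp add: UNIV_letter)

lemma letters_eq_UNIV: "letters = UNIV"
  by (simp add: letters_def UNIV_letter)

lemma sum_UNIV_letter: "(\<Sum>i\<in>UNIV. f i) = f A + f B + (f X :: 'a::comm_monoid_add)"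
  by (simp add: UNIV_letter add.assoc)

lemma sum_UNIV_triple:
  "(\<Sum>t\<in>UNIV. f t) = (\<Sum>k\<in>UNIV. \<Sum>i\<in>UNIV. \<Sum>j\<in>UNIV. f (k, i, j))"
  for f :: "'a::finite \<times> 'b::finite \<times> 'c::finite \<Rightarrow> 'd::comm_monoid_add"
  by (simp add: sum.cartesian_product flip: UNIV_Times_UNIV)

definition pair_mass :: "('a \<Rightarrow> 'a \<Rightarrow> bool) \<Rightarrow> ('a::finite \<Rightarrow> real) \<Rightarrow> real" where
  "pair_mass P x = (\<Sum>t\<in>UNIV. \<Sum>u\<in>UNIV. of_bool (P t u) * x t * x u)"

definition push :: "('a \<Rightarrow> 'b \<Rightarrow> real) \<Rightarrow> ('a::finite \<Rightarrow> real) \<Rightarrow> 'b \<Rightarrow> real" where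
  "push K x t' = (\<Sum>t\<in>UNIV. x t * K t t')"

definition stochastic :: "('a \<Rightarrow> 'b::finite \<Rightarrow> real) \<Rightarrow> bool" where
  "stochastic K \<longleftrightarrow> (\<forall>t t'. 0 \<le> K t t') \<and> (\<forall>t. (\<Sum>t'\<in>UNIV. K t t') = 1)"

lemma pair_mass_nonneg: "(\<And>t. 0 \<le> x t) \<Longrightarrow> 0 \<le> pair_mass P x"
  unfolding pair_mass_def by (intro sum_nonneg mult_nonneg_nonneg) auto

lemma push_nonneg: "stochastic K \<Longrightarrow> (\<And>t. 0 \<le> x t) \<Longrightarrow> 0 \<le> push K x t'"
  unfolding push_def stochastic_def by (intro sum_nonneg mult_nonneg_nonneg) auto

lemma sum_push_invariant:
  assumes "\<And>t. (\<Sum>t'\<in>UNIV. K t t' * g t') = g t"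
  shows "(\<Sum>t'\<in>UNIV. g t' * push K x t') = (\<Sum>t\<in>UNIV. g t * x t)"
proof -
  have "(\<Sum>t'\<in>UNIV. g t' * push K x t') = (\<Sum>t\<in>UNIV. x t * (\<Sum>t'\<in>UNIV. K t t' * g t'))"
    unfolding push_def sum_distrib_left by (subst sum.swap) (simp add: mult_ac)
  also have "\<dots> = (\<Sum>t\<in>UNIV. g t * x t)"
    unfolding assms by (simp add: mult.commute)
  finally show ?thesis .
qed

lemma pair_mass_push:
  "pair_mass P (push K x) = (\<Sum>t\<in>UNIV. \<Sum>u\<in>UNIV. x t * x u *
     (\<Sum>t'\<in>UNIV. \<Sum>u'\<in>UNIV. K t t' * K u u' * of_bool (P t' u')))"
proof -
  have "pair_mass P (push K x) = (\<Sum>t'\<in>UNIV. \<Sum>u'\<in>UNIV. \<Sum>t\<in>UNIV. \<Sum>u\<in>UNIV.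
      x t * x u * (K t t' * K u u' * of_bool (P t' u')))"
    unfolding pair_mass_def push_def
    by (simp add: sum_product sum_distrib_left sum_distrib_right mult_ac)
  also have "\<dots> = (\<Sum>t\<in>UNIV. \<Sum>u\<in>UNIV. \<Sum>t'\<in>UNIV. \<Sum>u'\<in>UNIV.
      x t * x u * (K t t' * K u u' * of_bool (P t' u')))"
    by (subst sum.swap, subst (2) sum.swap, subst (3) sum.swap, subst (2) sum.swap, rule refl)
  finally show ?thesis by (simp only: sum_distrib_left)
qed

lemma pair_mass_push_ge:
  assumes K: "stochastic K"
    and preserves: "\<And>t u t' u'. P t u \<Longrightarrow> K t t' \<noteq> 0 \<Longrightarrow> K u u' \<noteq> 0 \<Longrightarrow> P t' u'"
    and x: "\<And>t. 0 \<le> x t"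
  shows "pair_mass P x \<le> pair_mass P (push K x)"
proof -
  have weight: "of_bool (P t u) \<le> (\<Sum>t'\<in>UNIV. \<Sum>u'\<in>UNIV. K t t' * K u u' * of_bool (P t' u'))"
    for t u
  proof (cases "P t u")
    case True
    have "(\<Sum>t'\<in>UNIV. \<Sum>u'\<in>UNIV. K t t' * K u u' * of_bool (P t' u'))
        = (\<Sum>t'\<in>UNIV. \<Sum>u'\<in>UNIV. K t t' * K u u')"
      using preserves[OF True]
      by (intro sum.cong refl) (metis mult_1_right mult_eq_0_iff of_bool_eq(1,2))
    also have "\<dots> = 1"
      using K by (simp add: stochastic_def flip: sum_distrib_left)
    finally show ?thesis using True by simp
  next
    case False
    then show ?thesis using K by (simp add: stochastic_def sum_nonneg)
  qed
  show ?thesis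
    unfolding pair_mass_push unfolding pair_mass_def
    using mult_left_mono[OF weight mult_nonneg_nonneg[OF x x]]
    by (intro sum_mono) (simp add: mult_ac)
qed

lemma pair_mass_push_scaled:
  assumes "\<And>t u. (\<Sum>t'\<in>UNIV. \<Sum>u'\<in>UNIV. K t t' * K u u' * of_bool (P t' u')) = c * of_bool (P t u)"
  shows "pair_mass P (push K x) = c * pair_mass P x"
  unfolding pair_mass_push assms by (simp add: pair_mass_def sum_distrib_left mult_ac)

definition kernel_snd :: "('b \<Rightarrow> 'b \<Rightarrow> real) \<Rightarrow> 'a \<times> 'b \<times> 'c \<Rightarrow> 'a \<times> 'b \<times> 'c \<Rightarrow> real" where
  "kernel_snd W = (\<lambda>(k, i, j) (k', i', j'). of_bool (k' = k \<and> j' = j) * W i i')"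

definition kernel_thd :: "('c \<Rightarrow> 'c \<Rightarrow> real) \<Rightarrow> 'a \<times> 'b \<times> 'c \<Rightarrow> 'a \<times> 'b \<times> 'c \<Rightarrow> real" where
  "kernel_thd W = (\<lambda>(k, i, j) (k', i', j'). of_bool (k' = k \<and> i' = i) * W j j')"

lemma sum_kernel_snd:
  "(\<Sum>t'\<in>UNIV. kernel_snd W (k, i, j) t' * f t') = (\<Sum>i'\<in>UNIV. W i i' * f (k, i', j))"
  for k :: "'a::finite" and W :: "'b::finite \<Rightarrow> 'b \<Rightarrow> real" and j :: "'c::finite"
  by (simp add: sum_UNIV_triple kernel_snd_def of_bool_conj mult.assoc
      flip: sum_distrib_left sum_distrib_right)

lemma sum_kernel_thd:
  "(\<Sum>t'\<in>UNIV. kernel_thd V (k, i, j) t' * f t') = (\<Sum>j'\<in>UNIV. V j j' * f (k, i, j'))"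
  for k :: "'a::finite" and i :: "'b::finite" and V :: "'c::finite \<Rightarrow> 'c \<Rightarrow> real"
  by (simp add: sum_UNIV_triple kernel_thd_def of_bool_conj mult.assoc
      flip: sum_distrib_left sum_distrib_right)

lemma push_kernel_snd:
  "push (kernel_snd W) x (k, i', j) = (\<Sum>i\<in>UNIV. x (k, i, j) * W i i')"
  for k :: "'a::finite" and W :: "'b::finite \<Rightarrow> 'b \<Rightarrow> real" and j :: "'c::finite"
  unfolding push_def
  by (simp add: sum_UNIV_triple kernel_snd_def, subst sum.swap,
      simp add: of_bool_conj mult.left_commute[of "x _"] mult.left_commute[of "W _ _"]
        flip: sum_distrib_left,
      simp add: mult.assoc flip: sum_distrib_left)

lemma push_kernel_thd:
  "push (kernel_thd V) x (k, i, j') = (\<Sum>j\<in>UNIV. x (k, i, j) * V j j')"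
  for k :: "'a::finite" and i :: "'b::finite" and V :: "'c::finite \<Rightarrow> 'c \<Rightarrow> real"
  unfolding push_def
  by (simp add: sum_UNIV_triple kernel_thd_def, subst sum.swap,
      simp add: of_bool_conj mult.left_commute[of "x _"] mult.left_commute[of "V _ _"]
        flip: sum_distrib_left,
      simp add: mult.assoc flip: sum_distrib_left)

lemma kernel_snd_nonzero:
  "kernel_snd W t t' \<noteq> 0 \<Longrightarrow>
    fst t' = fst t \<and> W (fst (snd t)) (fst (snd t')) \<noteq> 0 \<and> snd (snd t') = snd (snd t)"
  by (auto simp: kernel_snd_def split_beta)

lemma kernel_thd_nonzero:
  "kernel_thd V t t' \<noteq> 0 \<Longrightarrow>
    fst t' = fst t \<and> fst (snd t') = fst (snd t) \<and> V (snd (snd t)) (snd (snd t')) \<noteq> 0"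
  by (auto simp: kernel_thd_def split_beta)

lemma stochastic_kernel_snd:
  fixes W :: "'b::finite \<Rightarrow> 'b \<Rightarrow> real"
  assumes "stochastic W"
  shows "stochastic (kernel_snd W :: 'a::finite \<times> 'b \<times> 'c::finite \<Rightarrow> _)"
  unfolding stochastic_def
proof (intro conjI allI)
  fix t t' :: "'a \<times> 'b \<times> 'c"
  show "0 \<le> kernel_snd W t t'"
    using assms by (simp add: stochastic_def kernel_snd_def split_beta)
  show "(\<Sum>t'\<in>UNIV. kernel_snd W t t') = 1"
    using assms sum_kernel_snd[of W "fst t" "fst (snd t)" "snd (snd t)" "\<lambda>_. 1"]
    by (simp add: stochastic_def)
qed

lemma stochastic_kernel_thd:
  fixes V :: "'c::finite \<Rightarrow> 'c \<Rightarrow> real"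
  assumes "stochastic V"
  shows "stochastic (kernel_thd V :: 'a::finite \<times> 'b::finite \<times> 'c \<Rightarrow> _)"
  unfolding stochastic_def
proof (intro conjI allI)
  fix t t' :: "'a \<times> 'b \<times> 'c"
  show "0 \<le> kernel_thd V t t'"
    using assms by (simp add: stochastic_def kernel_thd_def split_beta)
  show "(\<Sum>t'\<in>UNIV. kernel_thd V t t') = 1"
    using assms sum_kernel_thd[of V "fst t" "fst (snd t)" "snd (snd t)" "\<lambda>_. 1"]
    by (simp add: stochastic_def)
qed

lemma sum_kernel_snd_fst:
  fixes W :: "'b::finite \<Rightarrow> 'b \<Rightarrow> real" and t :: "'a::finite \<times> 'b \<times> 'c::finite"
  assumes "\<And>i. (\<Sum>i'\<in>UNIV. W i i') = 1"
  shows "(\<Sum>t'\<in>UNIV. kernel_snd W t t' * g (fst t')) = g (fst t)"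
  using sum_kernel_snd[of W "fst t" "fst (snd t)" "snd (snd t)" "\<lambda>t'. g (fst t')"]
  by (simp add: assms flip: sum_distrib_right)

lemma sum_kernel_thd_fst:
  fixes V :: "'c::finite \<Rightarrow> 'c \<Rightarrow> real" and t :: "'a::finite \<times> 'b::finite \<times> 'c"
  assumes "\<And>j. (\<Sum>j'\<in>UNIV. V j j') = 1"
  shows "(\<Sum>t'\<in>UNIV. kernel_thd V t t' * g (fst t')) = g (fst t)"
  using sum_kernel_thd[of V "fst t" "fst (snd t)" "snd (snd t)" "\<lambda>t'. g (fst t')"]
  by (simp add: assms flip: sum_distrib_right)

lemma push_kernel_snd_thd_commute:
  "push (kernel_snd W) (push (kernel_thd V) x) = push (kernel_thd V) (push (kernel_snd W) x)"
  for W :: "'b::finite \<Rightarrow> 'b \<Rightarrow> real" and V :: "'c::finite \<Rightarrow> 'c \<Rightarrow> real"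
    and x :: "'a::finite \<times> 'b \<times> 'c \<Rightarrow> real"
proof
  fix t :: "'a \<times> 'b \<times> 'c"
  obtain k i' j' where t: "t = (k, i', j')" by (cases t rule: prod_cases3)
  have "push (kernel_snd W) (push (kernel_thd V) x) t
      = (\<Sum>i\<in>UNIV. \<Sum>j\<in>UNIV. x (k, i, j) * V j j' * W i i')"
    by (simp add: t push_kernel_snd push_kernel_thd sum_distrib_right)
  also have "\<dots> = (\<Sum>j\<in>UNIV. \<Sum>i\<in>UNIV. x (k, i, j) * V j j' * W i i')"
    by (rule sum.swap)
  also have "\<dots> = push (kernel_thd V) (push (kernel_snd W) x) t"
    by (simp add: t push_kernel_snd push_kernel_thd sum_distrib_left sum_distrib_right mult_ac)
  finally show "push (kernel_snd W) (push (kernel_thd V) x) t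
      = push (kernel_thd V) (push (kernel_snd W) x) t" .
qed

type_synonym triple = "letter \<times> letter \<times> letter"

definition T_rel :: "triple \<Rightarrow> triple \<Rightarrow> bool" where
  "T_rel t u \<longleftrightarrow> fst t = A \<and> fst u = B \<and> arrow t u"

definition R_rel :: "triple \<Rightarrow> triple \<Rightarrow> bool" where
  "R_rel t u \<longleftrightarrow> fst (snd t) = A \<and> fst (snd u) = B \<and> arrow t u"

definition S_rel :: "triple \<Rightarrow> triple \<Rightarrow> bool" where
  "S_rel t u \<longleftrightarrow> snd (snd t) = A \<and> snd (snd u) = B \<and> arrow t u"

lemma T_val_eq: "T_val x = pair_mass T_rel x"
  unfolding pair_mass_def T_val_def sum_UNIV_triple
  by (simp add: letters_def UNIV_letter T_rel_def arrow_def step_def)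

lemma R_val_eq: "R_val x = pair_mass R_rel x"
  unfolding pair_mass_def R_val_def sum_UNIV_triple
  by (simp add: letters_def UNIV_letter R_rel_def arrow_def step_def)

lemma S_val_eq: "S_val x = pair_mass S_rel x"
  unfolding pair_mass_def S_val_def sum_UNIV_triple
  by (simp add: letters_def UNIV_letter S_rel_def arrow_def step_def)

lemma s_val_eq: "s_val x m = (\<Sum>t\<in>UNIV. of_bool (fst t = m) * x t)"
  unfolding s_val_def letters_eq_UNIV sum_UNIV_triple
  by (cases m) (simp_all add: sum_UNIV_letter)

lemma simplex_eq: "simplex = {x. (\<forall>t. 0 \<le> x t) \<and> (\<Sum>t\<in>UNIV. x t) = 1}"
  unfolding simplex_def letters_eq_UNIV sum_UNIV_triple ..

lemma simplex_nonneg: "x \<in> simplex \<Longrightarrow> 0 \<le> x t"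
  unfolding simplex_eq by blast

lemma simplex_sum: "x \<in> simplex \<Longrightarrow> (\<Sum>t\<in>UNIV. x t) = 1"
  unfolding simplex_eq by blast

lemma s_val_nonneg: "x \<in> simplex \<Longrightarrow> 0 \<le> s_val x m"
  unfolding s_val_eq by (auto intro: sum_nonneg simplex_nonneg)

lemma simplex_push:
  assumes K: "stochastic K" and x: "x \<in> simplex"
  shows "push K x \<in> simplex"
proof -
  have "0 \<le> push K x t" for t
    using push_nonneg[OF K] x unfolding simplex_eq by blast
  moreover have "(\<Sum>t\<in>UNIV. push K x t) = 1"
    using sum_push_invariant[of K "\<lambda>_. 1" x] K x
    by (simp add: stochastic_def simplex_eq del: split_paired_All)
  ultimately show ?thesis
    by (simp add: simplex_eq)
qed

lemma s_val_push_kernel_snd: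
  "(\<And>i. (\<Sum>i'\<in>UNIV. W i i') = 1) \<Longrightarrow> s_val (push (kernel_snd W) x) m = s_val x m"
  unfolding s_val_eq by (intro sum_push_invariant sum_kernel_snd_fst)

lemma s_val_push_kernel_thd:
  "(\<And>j. (\<Sum>j'\<in>UNIV. V j j') = 1) \<Longrightarrow> s_val (push (kernel_thd V) x) m = s_val x m"
  unfolding s_val_eq by (intro sum_push_invariant sum_kernel_thd_fst)

definition move_A_to_X :: "real \<Rightarrow> letter \<Rightarrow> letter \<Rightarrow> real" where
  "move_A_to_X a i i' =
    (if i = A then (if i' = A then 1 - a else if i' = X then a else 0) else of_bool (i' = i))"

definition relaxes :: "letter \<Rightarrow> letter \<Rightarrow> bool" where
  "relaxes i i' \<longleftrightarrow> i' = i \<or> (i = A \<and> i' = X)"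

lemma sum_move_A_to_X: "(\<Sum>i'\<in>UNIV. move_A_to_X a i i') = 1"
  by (cases i) (simp_all add: sum_UNIV_letter move_A_to_X_def)

lemma stochastic_move_A_to_X: "0 \<le> a \<Longrightarrow> a \<le> 1 \<Longrightarrow> stochastic (move_A_to_X a)"
  unfolding stochastic_def by (simp add: sum_move_A_to_X, simp add: move_A_to_X_def)

lemma move_A_to_X_nonzero: "move_A_to_X a i i' \<noteq> 0 \<Longrightarrow> relaxes i i'"
  by (cases i; cases i') (simp_all add: move_A_to_X_def relaxes_def)

lemma continuous_on_move_A_to_X [continuous_intros]: "continuous_on S (\<lambda>a. move_A_to_X a i i')"
  by (cases i; cases i') (simp_all add: move_A_to_X_def continuous_intros)

lemma step_relaxes: "step k l \<Longrightarrow> relaxes k k' \<Longrightarrow> relaxes l l' \<Longrightarrow> step k' l'"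
  unfolding step_def relaxes_def by (cases k; cases l) auto

lemma arrow_relaxes:
  assumes "arrow (k, i, j) (l, p, q)"
    and "relaxes i i'" "relaxes j j'" "relaxes p p'" "relaxes q q'"
  shows "arrow (k, i', j') (l, p', q')"
  using assms step_relaxes unfolding arrow_def by (auto simp: relaxes_def)

lemma arrow_kernel_snd_move:
  "arrow t u \<Longrightarrow> kernel_snd (move_A_to_X a) t t' \<noteq> 0 \<Longrightarrow> kernel_snd (move_A_to_X a) u u' \<noteq> 0
    \<Longrightarrow> arrow t' u'"
  by (cases t rule: prod_cases3, cases u rule: prod_cases3, cases t' rule: prod_cases3,
      cases u' rule: prod_cases3)
    (auto dest!: kernel_snd_nonzero move_A_to_X_nonzero intro: arrow_relaxes simp: relaxes_def)

lemma arrow_kernel_thd_move: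
  "arrow t u \<Longrightarrow> kernel_thd (move_A_to_X a) t t' \<noteq> 0 \<Longrightarrow> kernel_thd (move_A_to_X a) u u' \<noteq> 0
    \<Longrightarrow> arrow t' u'"
  by (cases t rule: prod_cases3, cases u rule: prod_cases3, cases t' rule: prod_cases3,
      cases u' rule: prod_cases3)
    (auto dest!: kernel_thd_nonzero move_A_to_X_nonzero intro: arrow_relaxes simp: relaxes_def)

lemma T_val_le_push_kernel_snd_move:
  "0 \<le> a \<Longrightarrow> a \<le> 1 \<Longrightarrow> (\<And>t. 0 \<le> x t) \<Longrightarrow> T_val x \<le> T_val (push (kernel_snd (move_A_to_X a)) x)"
  unfolding T_val_eq
  by (rule pair_mass_push_ge[OF stochastic_kernel_snd[OF stochastic_move_A_to_X]])
    (auto simp: T_rel_def dest: arrow_kernel_snd_move kernel_snd_nonzero)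

lemma T_val_le_push_kernel_thd_move:
  "0 \<le> b \<Longrightarrow> b \<le> 1 \<Longrightarrow> (\<And>t. 0 \<le> x t) \<Longrightarrow> T_val x \<le> T_val (push (kernel_thd (move_A_to_X b)) x)"
  unfolding T_val_eq
  by (rule pair_mass_push_ge[OF stochastic_kernel_thd[OF stochastic_move_A_to_X]])
    (auto simp: T_rel_def dest: arrow_kernel_thd_move kernel_thd_nonzero)

lemma S_val_le_push_kernel_snd_move:
  "0 \<le> a \<Longrightarrow> a \<le> 1 \<Longrightarrow> (\<And>t. 0 \<le> x t) \<Longrightarrow> S_val x \<le> S_val (push (kernel_snd (move_A_to_X a)) x)"
  unfolding S_val_eq
  by (rule pair_mass_push_ge[OF stochastic_kernel_snd[OF stochastic_move_A_to_X]])
    (auto simp: S_rel_def dest: arrow_kernel_snd_move kernel_snd_nonzero)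

lemma R_val_le_push_kernel_thd_move:
  "0 \<le> b \<Longrightarrow> b \<le> 1 \<Longrightarrow> (\<And>t. 0 \<le> x t) \<Longrightarrow> R_val x \<le> R_val (push (kernel_thd (move_A_to_X b)) x)"
  unfolding R_val_eq
  by (rule pair_mass_push_ge[OF stochastic_kernel_thd[OF stochastic_move_A_to_X]])
    (auto simp: R_rel_def dest: arrow_kernel_thd_move kernel_thd_nonzero)

lemma R_val_push_kernel_snd_move:
  "R_val (push (kernel_snd (move_A_to_X a)) x) = (1 - a) * R_val x"
  unfolding R_val_eq
proof (rule pair_mass_push_scaled)
  fix t u :: triple
  obtain k i j where t: "t = (k, i, j)" by (cases t rule: prod_cases3)
  obtain l p q where u: "u = (l, p, q)" by (cases u rule: prod_cases3)
  show "(\<Sum>t'\<in>UNIV. \<Sum>u'\<in>UNIV. kernel_snd (move_A_to_X a) t t' * kernel_snd (move_A_to_X a) u u'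
      * of_bool (R_rel t' u')) = (1 - a) * of_bool (R_rel t u)"
    unfolding t u mult.assoc sum_distrib_left[symmetric] sum_kernel_snd
    by (cases i; cases p) (simp_all add: sum_UNIV_letter R_rel_def move_A_to_X_def)
qed

lemma S_val_push_kernel_thd_move:
  "S_val (push (kernel_thd (move_A_to_X b)) x) = (1 - b) * S_val x"
  unfolding S_val_eq
proof (rule pair_mass_push_scaled)
  fix t u :: triple
  obtain k i j where t: "t = (k, i, j)" by (cases t rule: prod_cases3)
  obtain l p q where u: "u = (l, p, q)" by (cases u rule: prod_cases3)
  show "(\<Sum>t'\<in>UNIV. \<Sum>u'\<in>UNIV. kernel_thd (move_A_to_X b) t t' * kernel_thd (move_A_to_X b) u u'
      * of_bool (S_rel t' u')) = (1 - b) * of_bool (S_rel t u)"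
    unfolding t u mult.assoc sum_distrib_left[symmetric] sum_kernel_thd
    by (cases j; cases q) (simp_all add: sum_UNIV_letter S_rel_def move_A_to_X_def)
qed

lemma continuous_on_pair_mass_push:
  "(\<And>t t'. continuous_on S (\<lambda>a. K a t t')) \<Longrightarrow> continuous_on S (\<lambda>a. pair_mass P (push (K a) x))"
  unfolding pair_mass_def push_def by (intro continuous_intros)

lemma continuous_on_kernel_snd_move: "continuous_on S (\<lambda>a. kernel_snd (move_A_to_X a) t t')"
  unfolding kernel_snd_def split_beta by (intro continuous_intros)

lemma continuous_on_kernel_thd_move: "continuous_on S (\<lambda>a. kernel_thd (move_A_to_X a) t t')"
  unfolding kernel_thd_def split_beta by (intro continuous_intros)

lemma exists_capping_fractions:
  fixes \<rho> \<sigma> :: "real \<Rightarrow> real"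
  assumes T: "0 \<le> T"
    and cont: "continuous_on {0..1} \<rho>" "continuous_on {0..1} \<sigma>"
    and nonneg: "\<And>b. b \<in> {0..1} \<Longrightarrow> 0 \<le> \<rho> b" "\<And>a. a \<in> {0..1} \<Longrightarrow> 0 \<le> \<sigma> a"
  obtains a b where "a \<in> {0..1}" "b \<in> {0..1}"
    "(1 - a) * \<rho> b = min (\<rho> b) T" "(1 - b) * \<sigma> a = min (\<sigma> a) T"
proof (cases "T = 0")
  case True
  then show ?thesis
    using that[of 1 1] nonneg[of 1] by simp
next
  case False
  with T have T_pos: "0 < T" by simp
  \<comment> \<open>c r is the fraction of r to remove to cut it down to T; the denominator
    max r T \<ge> T > 0 keeps c continuous at r = 0\<close>
  define c where "c r = max 0 ((r - T) / max r T)" for r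
  have c_range: "c r \<in> {0..1}" for r
    using T_pos by (auto simp: c_def divide_le_eq_1 max_def)
  have c_cut: "(1 - c r) * r = min r T" if "0 \<le> r" for r
  proof (cases "r \<le> T")
    case True
    then show ?thesis
      using T_pos by (simp add: c_def divide_nonpos_pos)
  next
    case False
    then show ?thesis
      using T_pos by (simp add: c_def field_simps)
  qed
  have c_cont: "continuous_on {0..1} (\<lambda>b. c (f b))" if "continuous_on {0..1} f" for f
    unfolding c_def using T_pos by (intro continuous_intros that) auto
  define F where "F p = (c (\<rho> (snd p)), c (\<sigma> (fst p)))" for p :: "real \<times> real"
  have "continuous_on ({0..1} \<times> {0..1}) F"
    unfolding F_def
    by (intro continuous_on_Pair continuous_on_compose2[OF c_cont[OF cont(1)] continuous_on_snd]
        continuous_on_compose2[OF c_cont[OF cont(2)] continuous_on_fst]) auto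
  moreover have "F \<in> {0..1} \<times> {0..1} \<rightarrow> {0..1} \<times> {0..1}"
    using c_range by (auto simp: F_def)
  ultimately obtain p where "p \<in> {0..1} \<times> {0..1}" "F p = p"
    by (rule brouwer[rotated 3]) (auto intro: compact_Times convex_Times)
  then obtain a b where ab: "a \<in> {0..1}" "b \<in> {0..1}" and "c (\<rho> b) = a" "c (\<sigma> a) = b"
    by (auto simp: F_def)
  then show ?thesis
    using that[OF ab] c_cut[OF nonneg(1)[OF ab(2)]] c_cut[OF nonneg(2)[OF ab(1)]] by simp
qed

definition transfer :: "real \<Rightarrow> real \<Rightarrow> weights \<Rightarrow> weights" where
  "transfer a b x = push (kernel_snd (move_A_to_X a)) (push (kernel_thd (move_A_to_X b)) x)"

lemma simplex_transfer: "a \<in> {0..1} \<Longrightarrow> b \<in> {0..1} \<Longrightarrow> x \<in> simplex \<Longrightarrow> transfer a b x \<in> simplex"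
  unfolding transfer_def
  by (intro simplex_push stochastic_kernel_snd stochastic_kernel_thd stochastic_move_A_to_X) auto

lemma s_val_transfer: "s_val (transfer a b x) m = s_val x m"
  by (simp add: transfer_def s_val_push_kernel_snd s_val_push_kernel_thd sum_move_A_to_X)

lemma T_val_le_transfer:
  assumes a: "a \<in> {0..1}" and b: "b \<in> {0..1}" and x: "x \<in> simplex"
  shows "T_val x \<le> T_val (transfer a b x)"
proof -
  have x_nonneg: "\<And>t. 0 \<le> x t"
    using x by (rule simplex_nonneg)
  have "T_val x \<le> T_val (push (kernel_thd (move_A_to_X b)) x)"
    using b x_nonneg by (intro T_val_le_push_kernel_thd_move) auto
  also have "\<dots> \<le> T_val (transfer a b x)"
    using a b x_nonneg unfolding transfer_def
    by (intro T_val_le_push_kernel_snd_move push_nonneg stochastic_kernel_thd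
        stochastic_move_A_to_X) auto
  finally show ?thesis .
qed

lemma R_val_transfer:
  "R_val (transfer a b x) = (1 - a) * R_val (push (kernel_thd (move_A_to_X b)) x)"
  by (simp add: transfer_def R_val_push_kernel_snd_move)

lemma S_val_transfer:
  "S_val (transfer a b x) = (1 - b) * S_val (push (kernel_snd (move_A_to_X a)) x)"
  by (simp add: transfer_def push_kernel_snd_thd_commute S_val_push_kernel_thd_move)

lemma G_obj_eq_F_obj: "R_val x \<le> T_val x \<Longrightarrow> S_val x \<le> T_val x \<Longrightarrow> G_obj x = F_obj x"
  by (simp add: F_obj_def G_obj_def min_absorb2)

lemma exists_balanced_dominating:
  assumes x: "x \<in> simplex"
  obtains y where "y \<in> simplex" "R_val y \<le> T_val y" "S_val y \<le> T_val y" "F_obj x \<le> G_obj y"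
proof -
  have x_nonneg: "\<And>t. 0 \<le> x t"
    using x by (rule simplex_nonneg)
  define \<rho> where "\<rho> b = R_val (push (kernel_thd (move_A_to_X b)) x)" for b
  define \<sigma> where "\<sigma> a = S_val (push (kernel_snd (move_A_to_X a)) x)" for a
  have R_le: "R_val x \<le> \<rho> b" if "b \<in> {0..1}" for b
    using that x_nonneg by (simp add: \<rho>_def R_val_le_push_kernel_thd_move)
  have S_le: "S_val x \<le> \<sigma> a" if "a \<in> {0..1}" for a
    using that x_nonneg by (simp add: \<sigma>_def S_val_le_push_kernel_snd_move)
  have R_nonneg: "0 \<le> R_val x" and S_nonneg: "0 \<le> S_val x" and T_nonneg: "0 \<le> T_val x"
    unfolding R_val_eq S_val_eq T_val_eq using x_nonneg by (auto intro: pair_mass_nonneg)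
  have \<rho>_nonneg: "0 \<le> \<rho> b" if "b \<in> {0..1}" for b
    using R_nonneg R_le[OF that] by linarith
  have \<sigma>_nonneg: "0 \<le> \<sigma> a" if "a \<in> {0..1}" for a
    using S_nonneg S_le[OF that] by linarith
  have \<rho>_cont: "continuous_on {0..1} \<rho>" and \<sigma>_cont: "continuous_on {0..1} \<sigma>"
    unfolding \<rho>_def \<sigma>_def R_val_eq S_val_eq
    by (intro continuous_on_pair_mass_push continuous_on_kernel_thd_move
        continuous_on_kernel_snd_move)+
  obtain a b where a: "a \<in> {0..1}" and b: "b \<in> {0..1}"
    and R_cut: "(1 - a) * \<rho> b = min (\<rho> b) (T_val x)"
    and S_cut: "(1 - b) * \<sigma> a = min (\<sigma> a) (T_val x)"
    by (rule exists_capping_fractions[OF T_nonneg \<rho>_cont \<sigma>_cont \<rho>_nonneg \<sigma>_nonneg])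
  let ?y = "transfer a b x"
  have T_le: "T_val x \<le> T_val ?y"
    using a b x by (rule T_val_le_transfer)
  have R_y: "R_val ?y = min (\<rho> b) (T_val x)" and S_y: "S_val ?y = min (\<sigma> a) (T_val x)"
    using R_cut S_cut by (simp_all add: R_val_transfer S_val_transfer \<rho>_def \<sigma>_def)
  show ?thesis
  proof (rule that[OF simplex_transfer[OF a b x]])
    show "R_val ?y \<le> T_val ?y" "S_val ?y \<le> T_val ?y"
      using R_y S_y T_le by auto
    have "min (T_val x) (R_val x) \<le> R_val ?y" "min (T_val x) (S_val x) \<le> S_val ?y"
      using R_y S_y R_le[OF b] S_le[OF a] by auto
    then show "F_obj x \<le> G_obj ?y"
      unfolding F_obj_def G_obj_def s_val_transfer using T_le s_val_nonneg[OF x]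
      by (intro add_mono mult_left_mono) auto
  qed
qed

lemma continuous_on_coordinate [continuous_intros]: "continuous_on S (\<lambda>x :: 'a \<Rightarrow> real. x t)"
  by (rule continuous_on_subset[OF continuous_on_product_coordinates]) simp

lemma continuous_on_F_obj: "continuous_on S F_obj"
  unfolding F_obj_def T_val_eq R_val_eq S_val_eq s_val_eq pair_mass_def
  by (intro continuous_intros)

lemma compact_simplex: "compact simplex"
proof -
  have "compactin (product_topology (\<lambda>_. euclidean) UNIV) (PiE UNIV (\<lambda>_::triple. {0..1::real}))"
    by (subst compactin_PiE) simp
  then have cube: "compact (PiE UNIV (\<lambda>_::triple. {0..1::real}))"
    unfolding euclidean_product_topology by simp
  have "closed {x :: weights. \<forall>t. 0 \<le> x t}"
    by (intro closed_Collect_all closed_Collect_le continuous_intros)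
  moreover have "closed {x :: weights. (\<Sum>t\<in>UNIV. x t) = 1}"
    by (intro closed_Collect_eq continuous_intros)
  ultimately have closed: "closed simplex"
    unfolding simplex_eq Collect_conj_eq by (rule closed_Int)
  have sub: "simplex \<subseteq> PiE UNIV (\<lambda>_::triple. {0..1::real})"
  proof
    fix x assume x: "x \<in> simplex"
    then have "0 \<le> x t \<and> x t \<le> 1" for t
      using member_le_sum[of t UNIV x] simplex_nonneg[OF x] simplex_sum[OF x] by simp
    then show "x \<in> PiE UNIV (\<lambda>_. {0..1})"
      by (simp add: PiE_UNIV_domain)
  qed
  show ?thesis
    using compact_Int_closed[OF cube closed] Int_absorb1[OF sub] by simp
qed

lemma simplex_nonempty: "simplex \<noteq> {}"
proof -
  have "(\<lambda>t. of_bool (t = (A, A, A))) \<in> simplex"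
    unfolding simplex_eq by (simp add: of_bool_def del: split_paired_All)
  then show ?thesis by blast
qed

theorem lemma6p2:
  shows "\<exists>M. is_max_on F_obj simplex M \<and>
             is_max_on G_obj {x \<in> simplex. R_val x \<le> T_val x \<and> S_val x \<le> T_val x} M"
proof -
  obtain x where x: "x \<in> simplex" and x_max: "\<forall>z\<in>simplex. F_obj z \<le> F_obj x"
    using continuous_attains_sup[OF compact_simplex simplex_nonempty continuous_on_F_obj] by blast
  obtain y where y: "y \<in> simplex" "R_val y \<le> T_val y" "S_val y \<le> T_val y"
    and F_le_G: "F_obj x \<le> G_obj y"
    using exists_balanced_dominating[OF x] .
  have G_le: "G_obj z \<le> F_obj x" if "z \<in> simplex" "R_val z \<le> T_val z" "S_val z \<le> T_val z" for z
    using that x_max G_obj_eq_F_obj by simp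
  with y F_le_G have "G_obj y = F_obj x"
    by (simp add: order_antisym)
  then show ?thesis
    unfolding is_max_on_def using x x_max y G_le by blast
qed

end
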